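(* Let $A\in\mathbb{C}^{n\times n}$ with $\|A\|_F=1$, $\lambda\in\mathbb{C}$, and $v,v'\in\mathbb{C}^n$ nonzero with $Av=\lambda v$. If $3.6\,\mu(A,\lambda,v)\,d_{\mathbb{P}}(v,v')\le\varepsilon<1$, then $\frac{\mu(A,\lambda,v)}{1+\varepsilon}\le\mu(A,\lambda,v')\le\frac{\mu(A,\lambda,v)}{1-\varepsilon}$.
   Context: $\|\cdot\|_F$ is the Frobenius norm. $d_{\mathbb{P}}(v,v')=\arccos(|\langle v,v'\rangle|/(\|v\|\|v'\|))$. For $v\ne0$, $T_v=v^\perp$, $P_{v^\perp}$ the orthogonal projection onto $T_v$, $A_{\lambda,v}=P_{v^\perp}(A-\lambda\mathrm{Id})|_{T_v}$, and $\mu(A,\lambda,v)=\|A\|_F\|A_{\lambda,v}^{-1}\|$ (operator norm; $\infty$ if not invertible). *)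

theory Defs
  imports "HOL-Analysis.Analysis" "HOL-Library.Extended_Real"
begin

text \<open>Complex n-vectors are complex^'n, n x n complex matrices are complex^'n^'n.
  The norm on complex^'n is the Euclidean (2-)norm.\<close>

definition cinner :: "complex^'n \<Rightarrow> complex^'n \<Rightarrow> complex" where
  "cinner v w = (\<Sum>i\<in>UNIV. v$i * cnj (w$i))"

definition frob_norm :: "complex^'n^'n \<Rightarrow> real" where
  "frob_norm A = sqrt (\<Sum>i\<in>UNIV. \<Sum>j\<in>UNIV. (cmod (A$i$j))\<^sup>2)"

definition dP :: "complex^'n \<Rightarrow> complex^'n \<Rightarrow> real" where
  "dP v v' = arccos (cmod (cinner v v') / (norm v * norm v'))"

definition Tsp :: "complex^'n \<Rightarrow> (complex^'n) set" where
  "Tsp v = {w. cinner w v = 0}"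

definition Pperp :: "complex^'n \<Rightarrow> complex^'n \<Rightarrow> complex^'n" where
  "Pperp v x = x - (cinner x v / cinner v v) *s v"

definition Alv :: "complex^'n^'n \<Rightarrow> complex \<Rightarrow> complex^'n \<Rightarrow> complex^'n \<Rightarrow> complex^'n" where
  "Alv A lam v w = Pperp v (A *v w - lam *s w)"

text \<open>operator norm of a map on the subspace S (0 on the zero subspace)\<close>
definition opnorm_on :: "(complex^'n) set \<Rightarrow> (complex^'n \<Rightarrow> complex^'n) \<Rightarrow> real" where
  "opnorm_on S g = Sup (insert 0 {norm (g w) / norm w | w. w \<in> S \<and> w \<noteq> 0})"

definition mu :: "complex^'n^'n \<Rightarrow> complex \<Rightarrow> complex^'n \<Rightarrow> ereal" where
  "mu A lam v = (if bij_betw (Alv A lam v) (Tsp v) (Tsp v)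
     then ereal (frob_norm A * opnorm_on (Tsp v) (inv_into (Tsp v) (Alv A lam v)))
     else \<infinity>)"

end

theory Submission
  imports Defs
begin

text \<open>Normalise \<open>v, v'\<close> to unit vectors \<open>u, w\<close> at angle \<open>\<theta>\<close>, so that
  \<open>c = |\<langle>u,w\<rangle>| = cos \<theta>\<close> and \<open>s = |P w| = sin \<theta>\<close>, where \<open>P\<close> projects onto \<open>u\<^sup>\<bottom>\<close>;
  let \<open>m = \<parallel>A_{\<lambda>,u}\<^sup>-\<^sup>1\<parallel>\<close>.  Because \<open>u\<close> is an eigenvector,
  \<open>P A_{\<lambda>,w} x = A_{\<lambda>,u} (P x) - \<langle>(A - \<lambda>) x, w\<rangle> P w\<close>, and the rank-one error has norm at
  most \<open>2 s |x|\<close> since \<open>\<parallel>A - \<lambda>\<parallel> \<le> 2\<close>.  As \<open>P\<close> shrinks vectors of \<open>w\<^sup>\<bottom>\<close> by at most the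
  factor \<open>c\<close>, this gives \<open>(c - 2ms) |x| \<le> m |A_{\<lambda>,w} x|\<close> on \<open>w\<^sup>\<bottom>\<close>; conversely, lifting
  targets from \<open>u\<^sup>\<bottom>\<close> to \<open>w\<^sup>\<bottom>\<close> along \<open>u\<close> gives
  \<open>c |y| \<le> (1 + 2ms) \<parallel>A_{\<lambda>,w}\<^sup>-\<^sup>1\<parallel> |A_{\<lambda>,u} y|\<close> on \<open>u\<^sup>\<bottom>\<close>.  Since \<open>m \<ge> 1/2\<close>, the
  hypothesis \<open>3.6 m \<theta> \<le> \<epsilon>\<close> makes \<open>1 - c + 2ms \<le> \<epsilon>\<close> and \<open>1 + 2ms \<le> (1 + \<epsilon>) c\<close>.\<close>

section \<open>The Hermitian product on \<open>complex^'n\<close>\<close>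

lemma cinner_add_left: "cinner (x + y) z = cinner x z + cinner y z"
  by (simp add: cinner_def distrib_right sum.distrib)

lemma cinner_add_right: "cinner x (y + z) = cinner x y + cinner x z"
  by (simp add: cinner_def distrib_left sum.distrib)

lemma cinner_diff_left: "cinner (x - y) z = cinner x z - cinner y z"
  by (simp add: cinner_def left_diff_distrib sum_subtractf)

lemma cinner_diff_right: "cinner x (y - z) = cinner x y - cinner x z"
  by (simp add: cinner_def right_diff_distrib sum_subtractf)

lemma cinner_scale_left: "cinner (a *s x) z = a * cinner x z"
  by (simp add: cinner_def sum_distrib_left mult.assoc)

lemma cinner_scale_right: "cinner x (a *s z) = cnj a * cinner x z"
  by (simp add: cinner_def sum_distrib_left mult.assoc mult.left_commute)

lemma cinner_scaleR_left: "cinner (r *\<^sub>R x) z = of_real r * cinner x z"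
  unfolding cinner_def vector_scaleR_component
  by (simp add: sum_distrib_left mult.assoc scaleR_conv_of_real)

lemma cinner_zero_left [simp]: "cinner 0 z = 0"
  by (simp add: cinner_def)

lemma cinner_commute: "cinner y x = cnj (cinner x y)"
  by (simp add: cinner_def mult.commute)

lemma norm_vec_sq: "(norm (x::complex^'n))\<^sup>2 = (\<Sum>i\<in>UNIV. (cmod (x$i))\<^sup>2)"
  by (simp add: norm_vec_def L2_set_def sum_nonneg)

lemma cinner_self: "cinner x x = complex_of_real ((norm x)\<^sup>2)"
  by (simp add: cinner_def norm_vec_sq complex_norm_square[symmetric])

lemma cinner_self_eq_0_iff: "cinner v v = 0 \<longleftrightarrow> v = 0"
  by (simp add: cinner_self)

lemma Re_cinner: "Re (cinner x y) = x \<bullet> y"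
  by (simp add: cinner_def inner_vec_def inner_complex_def Re_sum)

lemma norm_smult: "norm (a *s (x::complex^'n)) = cmod a * norm x"
  by (simp add: norm_vec_def L2_set_def norm_mult power_mult_distrib
      sum_distrib_left[symmetric] real_sqrt_mult)

text \<open>Reduced to the real inequality by rotating \<open>y\<close> so that the Hermitian product becomes
  real.\<close>
lemma cinner_cauchy_schwarz: "cmod (cinner x y) \<le> norm x * norm y"
proof -
  define a where "a = cinner x y"
  have "(cmod a)\<^sup>2 = Re (cinner x (a *s y))"
    by (simp add: cinner_scale_right a_def complex_mult_cnj cmod_def power2_eq_square)
  also have "\<dots> \<le> norm x * norm (a *s y)"
    using norm_cauchy_schwarz[of x "a *s y"] by (simp add: Re_cinner)
  finally have "cmod a * cmod a \<le> cmod a * (norm x * norm y)"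
    by (simp add: norm_smult power2_eq_square algebra_simps)
  then show ?thesis
    unfolding a_def by (cases "cinner x y = 0") auto
qed

lemma norm_sq_eq_Re_cinner: "(norm x)\<^sup>2 = Re (cinner x x)"
  by (simp add: cinner_self)

lemma norm_add_sq_orthogonal:
  "cinner p q = 0 \<Longrightarrow> (norm (p + q))\<^sup>2 = (norm p)\<^sup>2 + (norm q)\<^sup>2"
  by (simp add: norm_sq_eq_Re_cinner cinner_add_left cinner_add_right cinner_commute[of p q])

lemma frob_norm_eq_norm: "frob_norm A = norm A"
  by (simp add: frob_norm_def norm_vec_def L2_set_def norm_vec_sq sum_nonneg)

lemma norm_matrix_vector_mult_le: "norm (A *v x) \<le> frob_norm A * norm x"
proof -
  have row: "cmod ((A *v x)$i) \<le> norm (A$i) * norm x" for i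
  proof -
    have "(A *v x)$i = cinner (A$i) (\<chi> j. cnj (x$j))"
      by (simp add: matrix_vector_mult_def cinner_def)
    moreover have "norm (\<chi> j. cnj (x$j)) = norm x"
      by (simp add: norm_vec_def)
    ultimately show ?thesis
      using cinner_cauchy_schwarz[of "A$i" "\<chi> j. cnj (x$j)"] by simp
  qed
  have "(norm (A *v x))\<^sup>2 = (\<Sum>i\<in>UNIV. (cmod ((A *v x)$i))\<^sup>2)"
    by (rule norm_vec_sq)
  also have "\<dots> \<le> (\<Sum>i\<in>UNIV. (norm (A$i))\<^sup>2 * (norm x)\<^sup>2)"
    by (intro sum_mono) (metis row power_mono power_mult_distrib norm_ge_zero)
  also have "\<dots> = (norm A * norm x)\<^sup>2"
    by (simp add: sum_distrib_right[symmetric] power_mult_distrib norm_vec_def L2_set_def sum_nonneg)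
  finally show ?thesis
    by (simp add: frob_norm_eq_norm power_mono_iff)
qed

section \<open>Orthogonal projection onto \<open>Tsp v\<close>\<close>

lemma Pperp_orthogonal: "v \<noteq> 0 \<Longrightarrow> cinner (Pperp v x) v = 0"
  by (simp add: Pperp_def cinner_diff_left cinner_scale_left cinner_self_eq_0_iff)

lemma Pperp_in_Tsp: "v \<noteq> 0 \<Longrightarrow> Pperp v x \<in> Tsp v"
  by (simp add: Tsp_def Pperp_orthogonal)

lemma Pperp_id_on_Tsp: "x \<in> Tsp v \<Longrightarrow> Pperp v x = x"
  by (simp add: Tsp_def Pperp_def)

lemma Pperp_add: "Pperp v (x + y) = Pperp v x + Pperp v y"
  by (simp add: Pperp_def cinner_add_left add_divide_distrib vector_sadd_rdistrib)

lemma Pperp_diff: "Pperp v (x - y) = Pperp v x - Pperp v y"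
  by (simp add: Pperp_def cinner_diff_left diff_divide_distrib vector_sub_rdistrib)

lemma Pperp_smult: "Pperp v (a *s x) = a *s Pperp v x"
  by (simp add: Pperp_def cinner_scale_left vector_ssub_ldistrib)

lemma Pperp_unit: "norm u = 1 \<Longrightarrow> Pperp u x = x - cinner x u *s u"
  by (simp add: Pperp_def cinner_self)

lemma norm_Pperp_sq:
  assumes "norm u = 1"
  shows "(norm (Pperp u x))\<^sup>2 = (norm x)\<^sup>2 - (cmod (cinner x u))\<^sup>2"
proof -
  have "u \<noteq> 0" using assms by auto
  have "x = Pperp u x + cinner x u *s u"
    using Pperp_unit[OF assms] by simp
  then have "(norm x)\<^sup>2 = (norm (Pperp u x + cinner x u *s u))\<^sup>2"
    by simp
  also have "\<dots> = (norm (Pperp u x))\<^sup>2 + (norm (cinner x u *s u))\<^sup>2"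
    by (rule norm_add_sq_orthogonal) (simp add: cinner_scale_right Pperp_orthogonal[OF \<open>u \<noteq> 0\<close>])
  finally show ?thesis
    by (simp add: norm_smult assms)
qed

lemma norm_Pperp_le:
  assumes "norm u = 1"
  shows "norm (Pperp u x) \<le> norm x"
proof -
  have "(norm (Pperp u x))\<^sup>2 \<le> (norm x)\<^sup>2"
    using norm_Pperp_sq[OF assms, of x] by simp
  then show ?thesis
    by (simp add: power_mono_iff)
qed

lemma norm_Pperp_unit_sq:
  assumes "norm u = 1" "norm w = 1"
  shows "(norm (Pperp u w))\<^sup>2 = 1 - (cmod (cinner u w))\<^sup>2"
    and "(norm (Pperp w u))\<^sup>2 = 1 - (cmod (cinner u w))\<^sup>2"
  using norm_Pperp_sq[OF assms(1), of w] norm_Pperp_sq[OF assms(2), of u] assms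
  by (simp_all add: cinner_commute[of w u])

lemma Tsp_smult: "k \<noteq> 0 \<Longrightarrow> Tsp (k *s v) = Tsp v"
  by (simp add: Tsp_def cinner_scale_right)

lemma Pperp_smult_vector:
  assumes "k \<noteq> 0"
  shows "Pperp (k *s v) = Pperp v"
proof
  fix x
  have "cinner x (k *s v) / cinner (k *s v) (k *s v) *s (k *s v)
      = (cnj k * k) / (cnj k * k) * (cinner x v / cinner v v) *s v"
    by (simp add: cinner_scale_left cinner_scale_right vector_smult_assoc)
  also have "\<dots> = cinner x v / cinner v v *s v"
    using assms by simp
  finally show "Pperp (k *s v) x = Pperp v x"
    by (simp add: Pperp_def)
qed

lemma Alv_smult_vector: "k \<noteq> 0 \<Longrightarrow> Alv A lam (k *s v) = Alv A lam v"
  by (simp add: Alv_def[abs_def] Pperp_smult_vector)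

lemma mu_smult_vector: "k \<noteq> 0 \<Longrightarrow> mu A lam (k *s v) = mu A lam v"
  by (simp add: mu_def Alv_smult_vector Tsp_smult)

lemma subspace_Tsp: "subspace (Tsp v)"
  unfolding subspace_def Tsp_def by (simp add: cinner_add_left cinner_scaleR_left)

lemma linear_smult: "linear (\<lambda>x::complex^'n. a *s x)"
  by (rule linearI) (simp_all add: vector_add_ldistrib vec_eq_iff scaleR_conv_of_real)

lemma linear_Pperp: "linear (Pperp v)"
  by (rule linearI)
    (simp add: Pperp_add,
     metis Pperp_smult scaleR_conv_of_real vector_scalar_mult_def scaleR_vec_def vec_eq_iff
       vector_scaleR_component vector_smult_component)

lemma linear_Alv: "linear (Alv A lam v)"
proof -
  have "linear (Pperp v \<circ> (\<lambda>x. A *v x - lam *s x))"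
    by (intro linear_compose linear_Pperp linear_compose_sub matrix_vector_mul_linear linear_smult)
  then show ?thesis
    by (simp add: Alv_def[abs_def] o_def)
qed

lemma Alv_in_Tsp: "v \<noteq> 0 \<Longrightarrow> Alv A lam v x \<in> Tsp v"
  by (simp add: Alv_def Pperp_in_Tsp)

section \<open>Norms of inverses on \<open>Tsp v\<close>\<close>

lemma opnorm_on_le:
  assumes "K \<ge> 0" "\<And>w. w \<in> S \<Longrightarrow> norm (g w) \<le> K * norm w"
  shows "opnorm_on S g \<le> K"
  unfolding opnorm_on_def
proof (rule cSup_least)
  fix x
  assume "x \<in> insert 0 {norm (g w) / norm w |w. w \<in> S \<and> w \<noteq> 0}"
  then show "x \<le> K"
    using assms by (auto simp: divide_le_eq)
qed simp

lemma
  assumes "\<And>w. w \<in> S \<Longrightarrow> norm (g w) \<le> K * norm w"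
  shows opnorm_on_nonneg: "opnorm_on S g \<ge> 0"
    and norm_le_opnorm_on: "w \<in> S \<Longrightarrow> norm (g w) \<le> opnorm_on S g * norm w"
proof -
  let ?X = "insert 0 {norm (g w) / norm w |w. w \<in> S \<and> w \<noteq> 0}"
  have "bdd_above ?X"
  proof (rule bdd_aboveI[of _ "max 0 K"])
    fix x
    assume "x \<in> ?X"
    then show "x \<le> max 0 K"
    proof
      assume "x \<in> {norm (g w) / norm w |w. w \<in> S \<and> w \<noteq> 0}"
      then obtain w where w: "w \<in> S" "w \<noteq> 0" "x = norm (g w) / norm w"
        by auto
      have "norm (g w) \<le> max 0 K * norm w"
        using assms[OF w(1)] mult_right_mono[of K "max 0 K" "norm w"] by simp
      then show ?thesis
        using w by (simp add: divide_le_eq)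
    qed simp
  qed
  then show "opnorm_on S g \<ge> 0"
    unfolding opnorm_on_def by (rule cSup_upper[rotated]) simp
  show "norm (g w) \<le> opnorm_on S g * norm w" if "w \<in> S"
  proof (cases "w = 0")
    case True
    then show ?thesis
      using assms[OF that] by simp
  next
    case False
    have "norm (g w) / norm w \<le> opnorm_on S g"
      unfolding opnorm_on_def by (rule cSup_upper[OF _ \<open>bdd_above ?X\<close>]) (use that False in auto)
    then show ?thesis
      using False by (simp add: divide_le_eq)
  qed
qed

lemma opnorm_on_inv_into_le:
  assumes "bij_betw g S S" "K \<ge> 0" "\<And>x. x \<in> S \<Longrightarrow> norm x \<le> K * norm (g x)"
  shows "opnorm_on S (inv_into S g) \<le> K"
proof (rule opnorm_on_le[OF assms(2)])
  fix t
  assume "t \<in> S"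
  then have "inv_into S g t \<in> S" "g (inv_into S g t) = t"
    using bij_betw_apply[OF bij_betw_inv_into[OF assms(1)]] bij_betw_inv_into_right[OF assms(1)]
    by auto
  then show "norm (inv_into S g t) \<le> K * norm t"
    using assms(3) by metis
qed

text \<open>Extended by \<open>Pperp u\<close>, the inverse becomes a linear map on the whole
  finite-dimensional space, hence bounded.\<close>
lemma inv_into_Tsp_bounded:
  fixes f :: "complex^'n \<Rightarrow> complex^'n"
  assumes u: "u \<noteq> 0" and f: "linear f" and bij: "bij_betw f (Tsp u) (Tsp u)"
  obtains K where "\<And>t. t \<in> Tsp u \<Longrightarrow> norm (inv_into (Tsp u) f t) \<le> K * norm t"
proof -
  let ?T = "Tsp u"
  let ?i = "inv_into ?T f"
  have inj: "inj_on f ?T"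
    using bij by (auto simp: bij_betw_def)
  have i_in: "?i t \<in> ?T" and f_i: "f (?i t) = t" if "t \<in> ?T" for t
    using that bij_betw_apply[OF bij_betw_inv_into[OF bij]] bij_betw_inv_into_right[OF bij]
    by auto
  have i_add: "?i (p + q) = ?i p + ?i q" if "p \<in> ?T" "q \<in> ?T" for p q
  proof -
    have "f (?i p + ?i q) = p + q"
      using linear_add[OF f] f_i that by simp
    moreover have "?i p + ?i q \<in> ?T"
      using subspace_add[OF subspace_Tsp] i_in that by blast
    ultimately show ?thesis
      using inv_into_f_f[OF inj] by metis
  qed
  have i_scale: "?i (r *\<^sub>R p) = r *\<^sub>R ?i p" if "p \<in> ?T" for p r
  proof -
    have "f (r *\<^sub>R ?i p) = r *\<^sub>R p"
      using linear_scale[OF f] f_i that by simp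
    moreover have "r *\<^sub>R ?i p \<in> ?T"
      using subspace_mul[OF subspace_Tsp] i_in that by blast
    ultimately show ?thesis
      using inv_into_f_f[OF inj] by metis
  qed
  have "linear (\<lambda>x. ?i (Pperp u x))"
    by (rule linearI)
      (simp_all add: Pperp_add i_add Pperp_in_Tsp[OF u] linear_scale[OF linear_Pperp] i_scale)
  then obtain K where "\<And>x. norm (?i (Pperp u x)) \<le> K * norm x"
    using linear_bounded by blast
  then show ?thesis
    using that Pperp_id_on_Tsp by metis
qed

lemma bij_betw_of_inj_on_subspace:
  fixes f :: "complex^'n \<Rightarrow> complex^'n"
  assumes "linear f" "subspace S" "f ` S \<subseteq> S" "inj_on f S"
  shows "bij_betw f S S"
proof -
  have "dim (f ` S) = dim S"
    using dim_image_eq[OF assms(1), of S] assms(2,4) span_eq_iff[of S] by metis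
  then have "f ` S = S"
    using subspace_dim_equal[of "f ` S" S] linear_subspace_image[OF assms(1,2)] assms(2,3) by simp
  then show ?thesis
    using assms(4) by (simp add: bij_betw_def)
qed

definition Alv_inv_norm :: "complex^'n^'n \<Rightarrow> complex \<Rightarrow> complex^'n \<Rightarrow> real" where
  "Alv_inv_norm A lam v = opnorm_on (Tsp v) (inv_into (Tsp v) (Alv A lam v))"

lemma mu_eq_Alv_inv_norm:
  "bij_betw (Alv A lam v) (Tsp v) (Tsp v) \<Longrightarrow> mu A lam v = ereal (frob_norm A * Alv_inv_norm A lam v)"
  by (simp add: mu_def Alv_inv_norm_def)

lemma
  assumes "v \<noteq> 0" and bij: "bij_betw (Alv A lam v) (Tsp v) (Tsp v)"
  shows Alv_inv_norm_nonneg: "Alv_inv_norm A lam v \<ge> 0"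
    and norm_le_Alv_inv_norm:
      "x \<in> Tsp v \<Longrightarrow> norm x \<le> Alv_inv_norm A lam v * norm (Alv A lam v x)"
proof -
  obtain K where K: "\<And>t. t \<in> Tsp v \<Longrightarrow> norm (inv_into (Tsp v) (Alv A lam v) t) \<le> K * norm t"
    using inv_into_Tsp_bounded[OF assms(1) linear_Alv bij] by blast
  let ?i = "inv_into (Tsp v) (Alv A lam v)"
  show "Alv_inv_norm A lam v \<ge> 0"
    unfolding Alv_inv_norm_def using K by (rule opnorm_on_nonneg)
  assume x: "x \<in> Tsp v"
  have "?i (Alv A lam v x) = x"
    using bij x by (simp add: bij_betw_def)
  moreover have "norm (?i (Alv A lam v x)) \<le> opnorm_on (Tsp v) ?i * norm (Alv A lam v x)"
    using K Alv_in_Tsp[OF assms(1)] by (rule norm_le_opnorm_on)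
  ultimately show "norm x \<le> Alv_inv_norm A lam v * norm (Alv A lam v x)"
    by (simp add: Alv_inv_norm_def)
qed

lemma mu_nonneg:
  assumes "v \<noteq> 0"
  shows "mu A lam v \<ge> 0"
  using Alv_inv_norm_nonneg[OF assms]
  by (cases "bij_betw (Alv A lam v) (Tsp v) (Tsp v)")
    (simp_all add: mu_def Alv_inv_norm_def frob_norm_def sum_nonneg)

section \<open>Perturbing the vector \<open>v\<close>\<close>

definition shifted :: "complex^'n^'n \<Rightarrow> complex \<Rightarrow> complex^'n \<Rightarrow> complex^'n" where
  "shifted A lam x = A *v x - lam *s x"

lemma Alv_eq_Pperp_shifted: "Alv A lam v x = Pperp v (shifted A lam x)"
  by (simp add: Alv_def shifted_def)

lemma shifted_diff: "shifted A lam (x - y) = shifted A lam x - shifted A lam y"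
  by (simp add: shifted_def matrix_vector_mult_diff_distrib vector_ssub_ldistrib)

lemma shifted_smult: "shifted A lam (a *s x) = a *s shifted A lam x"
  by (simp add: shifted_def vector_scalar_commute vector_ssub_ldistrib vector_smult_assoc mult.commute)

lemma norm_shifted_le:
  assumes "frob_norm A = 1" "norm u = 1" "A *v u = lam *s u"
  shows "norm (shifted A lam x) \<le> 2 * norm x"
proof -
  have "cmod lam \<le> 1"
    using norm_matrix_vector_mult_le[of A u] assms by (simp add: norm_smult)
  then have "norm (lam *s x) \<le> norm x"
    by (simp add: norm_smult mult_left_le_one_le)
  moreover have "norm (A *v x) \<le> norm x"
    using norm_matrix_vector_mult_le[of A x] assms(1) by simp
  ultimately show ?thesis
    unfolding shifted_def using norm_triangle_ineq4[of "A *v x" "lam *s x"] by linarith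
qed

lemma Pperp_Alv_perturbation:
  assumes "norm u = 1" "norm w = 1" "A *v u = lam *s u"
  shows "Pperp u (Alv A lam w x)
    = Alv A lam u (Pperp u x) - cinner (shifted A lam x) w *s Pperp u w"
proof -
  have "shifted A lam u = 0"
    using assms(3) by (simp add: shifted_def)
  then have "Alv A lam u (Pperp u x) = Pperp u (shifted A lam x)"
    using assms(1) by (simp add: Alv_eq_Pperp_shifted Pperp_unit shifted_diff shifted_smult)
  moreover have "Pperp u (Alv A lam w x)
      = Pperp u (shifted A lam x) - cinner (shifted A lam x) w *s Pperp u w"
    using assms(2) by (simp add: Alv_eq_Pperp_shifted Pperp_unit[of w] Pperp_diff Pperp_smult)
  ultimately show ?thesis
    by simp
qed

lemma norm_perturbation_term_le:
  assumes "frob_norm A = 1" "norm u = 1" "norm w = 1" "A *v u = lam *s u"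
  shows "norm (cinner (shifted A lam x) w *s Pperp u w) \<le> 2 * norm (Pperp u w) * norm x"
proof -
  have "cmod (cinner (shifted A lam x) w) \<le> 2 * norm x"
    using cinner_cauchy_schwarz[of "shifted A lam x" w] norm_shifted_le[OF assms(1,2,4), of x]
      assms(3) by simp
  then have "cmod (cinner (shifted A lam x) w) * norm (Pperp u w) \<le> 2 * norm x * norm (Pperp u w)"
    by (rule mult_right_mono) simp
  then show ?thesis
    by (simp add: norm_smult algebra_simps)
qed

lemma cmod_cinner_Tsp_le:
  assumes "norm u = 1" "norm w = 1" "x \<in> Tsp w"
  shows "cmod (cinner x u) \<le> norm (Pperp u w) * norm x"
proof -
  have "cinner x w = 0"
    using assms(3) by (simp add: Tsp_def)
  then have "cinner x (Pperp w u) = cinner x u"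
    by (simp add: Pperp_unit[OF assms(2)] cinner_diff_right cinner_scale_right)
  moreover have "norm (Pperp w u) = norm (Pperp u w)"
    using norm_Pperp_unit_sq[OF assms(1,2)] by (metis norm_ge_zero power2_eq_iff_nonneg)
  ultimately show ?thesis
    using cinner_cauchy_schwarz[of x "Pperp w u"] by (simp add: mult.commute)
qed

lemma norm_Pperp_ge:
  assumes "norm u = 1" "norm w = 1" "x \<in> Tsp w"
  shows "cmod (cinner u w) * norm x \<le> norm (Pperp u x)"
proof -
  have "(cmod (cinner x u))\<^sup>2 \<le> (norm (Pperp u w) * norm x)\<^sup>2"
    using cmod_cinner_Tsp_le[OF assms] by (simp add: power_mono)
  then have "(cmod (cinner u w) * norm x)\<^sup>2 \<le> (norm (Pperp u x))\<^sup>2"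
    using norm_Pperp_sq[OF assms(1), of x] norm_Pperp_unit_sq(1)[OF assms(1,2)]
    by (simp add: power_mult_distrib algebra_simps)
  then show ?thesis
    by (simp add: power_mono_iff)
qed

lemma Pperp_lift:
  assumes "norm u = 1" "norm w = 1" "t \<in> Tsp u" "cinner u w \<noteq> 0"
  obtains L where "L \<in> Tsp w" "Pperp u L = t" "cmod (cinner u w) * norm L \<le> norm t"
proof
  define L where "L = t - (cinner t w / cinner u w) *s u"
  show L: "L \<in> Tsp w"
    using assms(4) by (simp add: Tsp_def L_def cinner_diff_left cinner_scale_left)
  have "cinner t u = 0"
    using assms(3) by (simp add: Tsp_def)
  then show P: "Pperp u L = t"
    using assms(1)
    by (simp add: Pperp_unit L_def cinner_diff_left cinner_scale_left cinner_self)
  show "cmod (cinner u w) * norm L \<le> norm t"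
    using norm_Pperp_ge[OF assms(1,2) L] P by simp
qed

lemma bij_Alv_of_lower_bound:
  assumes "w \<noteq> 0" "0 < a" "\<And>x. x \<in> Tsp w \<Longrightarrow> a * norm x \<le> b * norm (Alv A lam w x)"
  shows "bij_betw (Alv A lam w) (Tsp w) (Tsp w)"
proof (rule bij_betw_of_inj_on_subspace[OF linear_Alv subspace_Tsp])
  show "Alv A lam w ` Tsp w \<subseteq> Tsp w"
    using Alv_in_Tsp[OF assms(1)] by blast
  show "inj_on (Alv A lam w) (Tsp w)"
  proof (rule inj_onI)
    fix x y
    assume "x \<in> Tsp w" "y \<in> Tsp w" "Alv A lam w x = Alv A lam w y"
    then have "x - y \<in> Tsp w" "Alv A lam w (x - y) = 0"
      by (simp_all add: subspace_diff[OF subspace_Tsp] linear_diff[OF linear_Alv])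
    then have "a * norm (x - y) \<le> 0"
      using assms(3) by fastforce
    then show "x = y"
      using assms(2) by (simp add: mult_le_0_iff)
  qed
qed

lemma Alv_inv_norm_le_of_lower_bound:
  assumes "bij_betw (Alv A lam v) (Tsp v) (Tsp v)" "0 < a" "0 \<le> b"
    and "\<And>x. x \<in> Tsp v \<Longrightarrow> a * norm x \<le> b * norm (Alv A lam v x)"
  shows "Alv_inv_norm A lam v \<le> b / a"
  unfolding Alv_inv_norm_def
proof (rule opnorm_on_inv_into_le[OF assms(1)])
  show "0 \<le> b / a"
    using assms(2,3) by simp
  show "norm x \<le> b / a * norm (Alv A lam v x)" if "x \<in> Tsp v" for x
    using assms(4)[OF that] assms(2) by (simp add: field_simps)
qed

lemma Alv_inv_norm_ge_half:
  assumes "frob_norm A = 1" "norm u = 1" "A *v u = lam *s u"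
    and bij: "bij_betw (Alv A lam u) (Tsp u) (Tsp u)"
    and "t \<in> Tsp u" "t \<noteq> 0"
  shows "1/2 \<le> Alv_inv_norm A lam u"
proof -
  have "u \<noteq> 0"
    using assms(2) by auto
  have "norm t \<le> Alv_inv_norm A lam u * norm (Alv A lam u t)"
    using norm_le_Alv_inv_norm[OF \<open>u \<noteq> 0\<close> bij \<open>t \<in> Tsp u\<close>] .
  also have "\<dots> \<le> Alv_inv_norm A lam u * (2 * norm t)"
    using norm_Pperp_le[OF assms(2)] norm_shifted_le[OF assms(1-3), of t]
      Alv_inv_norm_nonneg[OF \<open>u \<noteq> 0\<close> bij]
    by (intro mult_left_mono) (auto simp: Alv_eq_Pperp_shifted intro: order_trans)
  finally show ?thesis
    using \<open>t \<noteq> 0\<close> by (simp add: algebra_simps)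
qed

lemma Alv_lower_bound_perturbed:
  assumes fA: "frob_norm A = 1" and u: "norm u = 1" and w: "norm w = 1"
    and eig: "A *v u = lam *s u" and bij: "bij_betw (Alv A lam u) (Tsp u) (Tsp u)"
    and x: "x \<in> Tsp w"
  defines "m \<equiv> Alv_inv_norm A lam u"
  shows "(cmod (cinner u w) - 2 * m * norm (Pperp u w)) * norm x \<le> m * norm (Alv A lam w x)"
proof -
  let ?r = "cinner (shifted A lam x) w *s Pperp u w"
  have "u \<noteq> 0"
    using u by auto
  have "norm (Alv A lam u (Pperp u x)) = norm (Pperp u (Alv A lam w x) + ?r)"
    using Pperp_Alv_perturbation[OF u w eig, of x] by simp
  also have "\<dots> \<le> norm (Alv A lam w x) + 2 * norm (Pperp u w) * norm x"
    using norm_Pperp_le[OF u] norm_perturbation_term_le[OF fA u w eig, of x]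
    by (intro order_trans[OF norm_triangle_ineq] add_mono)
  finally have Alv_u: "norm (Alv A lam u (Pperp u x))
      \<le> norm (Alv A lam w x) + 2 * norm (Pperp u w) * norm x" .
  have "cmod (cinner u w) * norm x \<le> norm (Pperp u x)"
    using norm_Pperp_ge[OF u w x] .
  also have "\<dots> \<le> m * norm (Alv A lam u (Pperp u x))"
    unfolding m_def using norm_le_Alv_inv_norm[OF \<open>u \<noteq> 0\<close> bij Pperp_in_Tsp[OF \<open>u \<noteq> 0\<close>]] .
  also have "\<dots> \<le> m * (norm (Alv A lam w x) + 2 * norm (Pperp u w) * norm x)"
    using Alv_u Alv_inv_norm_nonneg[OF \<open>u \<noteq> 0\<close> bij] by (simp add: m_def mult_left_mono)
  finally show ?thesis
    by (simp add: algebra_simps)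
qed

lemma Alv_upper_bound_perturbed:
  assumes fA: "frob_norm A = 1" and u: "norm u = 1" and w: "norm w = 1"
    and eig: "A *v u = lam *s u"
    and bij_u: "bij_betw (Alv A lam u) (Tsp u) (Tsp u)"
    and bij_w: "bij_betw (Alv A lam w) (Tsp w) (Tsp w)"
    and c: "cinner u w \<noteq> 0" and y: "y \<in> Tsp u"
  defines "m \<equiv> Alv_inv_norm A lam u" and "m' \<equiv> Alv_inv_norm A lam w"
  shows "cmod (cinner u w) * norm y
    \<le> (1 + 2 * m * norm (Pperp u w)) * m' * norm (Alv A lam u y)"
proof -
  let ?c = "cmod (cinner u w)" and ?s = "norm (Pperp u w)" and ?t = "Alv A lam u y"
  have "u \<noteq> 0" "w \<noteq> 0"
    using u w by auto
  obtain L where L: "L \<in> Tsp w" "Pperp u L = ?t" "?c * norm L \<le> norm ?t"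
    using Pperp_lift[OF u w Alv_in_Tsp[OF \<open>u \<noteq> 0\<close>] c] by blast
  obtain x where x: "x \<in> Tsp w" "Alv A lam w x = L"
    using L(1) bij_w unfolding bij_betw_def by (metis imageE)
  let ?r = "cinner (shifted A lam x) w *s Pperp u w"
  have "Alv A lam u (Pperp u x - y) = Alv A lam u (Pperp u x) - ?t"
    by (rule linear_diff[OF linear_Alv])
  also have "\<dots> = ?r"
    using Pperp_Alv_perturbation[OF u w eig, of x] x(2) L(2) by simp
  finally have "norm (Pperp u x - y) \<le> m * norm ?r"
    unfolding m_def
    using norm_le_Alv_inv_norm[OF \<open>u \<noteq> 0\<close> bij_u] subspace_diff[OF subspace_Tsp]
      Pperp_in_Tsp[OF \<open>u \<noteq> 0\<close>] y by metis
  also have "\<dots> \<le> m * (2 * ?s * norm x)"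
    using norm_perturbation_term_le[OF fA u w eig] Alv_inv_norm_nonneg[OF \<open>u \<noteq> 0\<close> bij_u]
    by (simp add: m_def mult_left_mono)
  finally have "norm y \<le> (1 + 2 * m * ?s) * norm x"
    using norm_triangle_ineq4[of "Pperp u x" "Pperp u x - y"] norm_Pperp_le[OF u, of x]
    by (simp add: algebra_simps)
  then have "?c * norm y \<le> (1 + 2 * m * ?s) * (?c * norm x)"
    by (metis mult_left_mono mult.left_commute norm_ge_zero)
  also have "?c * norm x \<le> m' * norm ?t"
  proof -
    have "?c * norm x \<le> ?c * (m' * norm L)"
      using norm_le_Alv_inv_norm[OF \<open>w \<noteq> 0\<close> bij_w x(1)] x(2) by (simp add: m'_def mult_left_mono)
    also have "\<dots> \<le> m' * norm ?t"
      using mult_left_mono[OF L(3) Alv_inv_norm_nonneg[OF \<open>w \<noteq> 0\<close> bij_w]]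
      by (simp add: m'_def mult.left_commute)
    finally show ?thesis .
  qed
  finally show ?thesis
    using Alv_inv_norm_nonneg[OF \<open>u \<noteq> 0\<close> bij_u]
    by (simp add: m_def mult_left_mono mult.assoc)
qed

lemma cos_ge_one_minus_sq_half:
  fixes x :: real
  shows "1 - x\<^sup>2 / 2 \<le> cos x"
proof -
  have "(sin (x/2))\<^sup>2 \<le> (x/2)\<^sup>2"
    using abs_sin_x_le_abs_x[of "x/2"] by (metis power2_abs abs_ge_zero power_mono)
  moreover have "cos x = 1 - 2 * (sin (x/2))\<^sup>2"
    using cos_double_sin[of "x/2"] by simp
  ultimately show ?thesis
    by (simp add: power_divide)
qed

text \<open>The constant 3.6 leaves room for the second-order term \<open>\<theta>\<^sup>2 \<le> 1.6 m \<theta>\<close>.\<close>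
lemma perturbation_constants:
  fixes m \<theta> \<epsilon> :: real
  assumes m: "1/2 \<le> m" and \<theta>: "0 \<le> \<theta>" and h: "36/10 * m * \<theta> \<le> \<epsilon>" and \<epsilon>: "\<epsilon> < 1"
  shows "1 - cos \<theta> + 2 * m * sin \<theta> \<le> \<epsilon>"
    and "1 + 2 * m * sin \<theta> \<le> (1 + \<epsilon>) * cos \<theta>"
    and "0 < cos \<theta>"
proof -
  have c: "1 - \<theta>\<^sup>2 / 2 \<le> cos \<theta>"
    by (rule cos_ge_one_minus_sq_half)
  have ms: "m * sin \<theta> \<le> m * \<theta>"
    using sin_x_le_x[OF \<theta>] m by (simp add: mult_left_mono)
  have m\<theta>: "0 \<le> m * \<theta>" "m * \<theta> < 1/3.6"
    using m \<theta> h \<epsilon> by simp_all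
  have "\<theta> * 1 \<le> \<theta> * (2 * m)"
    using m \<theta> by (intro mult_left_mono) auto
  then have \<theta>_small: "\<theta> \<le> 1/1.8"
    using m\<theta> by (simp add: algebra_simps)
  have "\<theta> \<le> 1.6 * m"
  proof -
    have "(1/2) * (1/2) \<le> m * m"
      by (rule mult_mono) (use m in auto)
    then have "\<theta> * (3.6 * m) \<le> 1.6 * m * (3.6 * m)"
      using m\<theta> by (simp add: algebra_simps)
    then show ?thesis
      by (rule mult_right_le_imp_le) (use m in linarith)
  qed
  then have sq: "\<theta>\<^sup>2 \<le> 1.6 * (m * \<theta>)"
    using mult_right_mono[of \<theta> "1.6 * m" \<theta>] \<theta> by (simp add: power2_eq_square)
  show "1 - cos \<theta> + 2 * m * sin \<theta> \<le> \<epsilon>"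
    using c ms sq h m\<theta> by linarith
  have "(1 + \<epsilon>) * (1 - \<theta>\<^sup>2 / 2) \<le> (1 + \<epsilon>) * cos \<theta>"
    using c h m\<theta> by (intro mult_left_mono) linarith+
  moreover have "(1 + \<epsilon>) * (1 - \<theta>\<^sup>2 / 2) = 1 + \<epsilon> - (1 + \<epsilon>) * \<theta>\<^sup>2 / 2"
    by (simp add: algebra_simps)
  moreover have "(1 + \<epsilon>) * \<theta>\<^sup>2 \<le> 2 * \<theta>\<^sup>2"
    using \<epsilon> by (intro mult_right_mono) auto
  ultimately show "1 + 2 * m * sin \<theta> \<le> (1 + \<epsilon>) * cos \<theta>"
    using ms sq h m\<theta> by linarith
  have "\<theta>\<^sup>2 \<le> (1/1.8)\<^sup>2"
    using power_mono[OF \<theta>_small \<theta>, of 2] .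
  then show "0 < cos \<theta>"
    using c by (simp add: power_divide)
qed

lemma
  assumes "norm u = 1" "norm w = 1"
  shows cos_arccos_cinner: "cos (arccos (cmod (cinner u w))) = cmod (cinner u w)"
    and sin_arccos_cinner: "sin (arccos (cmod (cinner u w))) = norm (Pperp u w)"
    and arccos_cinner_nonneg: "0 \<le> arccos (cmod (cinner u w))"
proof -
  have c: "\<bar>cmod (cinner u w)\<bar> \<le> 1"
    using cinner_cauchy_schwarz[of u w] assms by simp
  then show "cos (arccos (cmod (cinner u w))) = cmod (cinner u w)"
    by (simp add: cos_arccos_abs)
  show "sin (arccos (cmod (cinner u w))) = norm (Pperp u w)"
    using sin_arccos_abs[OF c] norm_Pperp_unit_sq(1)[OF assms]
    by (metis norm_ge_zero real_sqrt_unique)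
  show "0 \<le> arccos (cmod (cinner u w))"
    using c norm_ge_zero[of "cinner u w"] by (intro arccos_lbound) linarith+
qed

lemma Alv_inv_norm_perturbation:
  assumes fA: "frob_norm A = 1" and u: "norm u = 1" and w: "norm w = 1"
    and eig: "A *v u = lam *s u" and bij_u: "bij_betw (Alv A lam u) (Tsp u) (Tsp u)"
    and "Pperp u w \<noteq> 0"
    and h: "36/10 * Alv_inv_norm A lam u * arccos (cmod (cinner u w)) \<le> \<epsilon>" and "\<epsilon> < 1"
  shows "bij_betw (Alv A lam w) (Tsp w) (Tsp w)"
    and "Alv_inv_norm A lam w \<le> Alv_inv_norm A lam u / (1 - \<epsilon>)"
    and "Alv_inv_norm A lam u \<le> (1 + \<epsilon>) * Alv_inv_norm A lam w"
proof -
  define m c s where "m = Alv_inv_norm A lam u" and "c = cmod (cinner u w)"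
    and "s = norm (Pperp u w)"
  have "u \<noteq> 0" "w \<noteq> 0"
    using u w by auto
  have half: "1/2 \<le> m"
    unfolding m_def
    using Alv_inv_norm_ge_half[OF fA u eig bij_u Pperp_in_Tsp[OF \<open>u \<noteq> 0\<close>] \<open>Pperp u w \<noteq> 0\<close>] .
  from perturbation_constants[OF half arccos_cinner_nonneg[OF u w] h[folded m_def] \<open>\<epsilon> < 1\<close>]
  have K: "1 - c + 2 * m * s \<le> \<epsilon>" "1 + 2 * m * s \<le> (1 + \<epsilon>) * c" "0 < c"
    by (simp_all add: cos_arccos_cinner[OF u w] sin_arccos_cinner[OF u w] c_def s_def)
  have lower: "(1 - \<epsilon>) * norm x \<le> m * norm (Alv A lam w x)" if "x \<in> Tsp w" for x
    using Alv_lower_bound_perturbed[OF fA u w eig bij_u that] K(1)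
      mult_right_mono[of "1 - \<epsilon>" "c - 2 * m * s" "norm x"]
    by (simp add: m_def c_def s_def)
  show bij_w: "bij_betw (Alv A lam w) (Tsp w) (Tsp w)"
    using bij_Alv_of_lower_bound[OF \<open>w \<noteq> 0\<close> _ lower] \<open>\<epsilon> < 1\<close> by simp
  show "Alv_inv_norm A lam w \<le> m / (1 - \<epsilon>)"
    using Alv_inv_norm_le_of_lower_bound[OF bij_w _ _ lower] half \<open>\<epsilon> < 1\<close> by simp
  have "0 \<le> (1 + \<epsilon>) * c * Alv_inv_norm A lam w"
  proof -
    have "0 \<le> 2 * m * s"
      using half by (simp add: s_def)
    then have "0 \<le> (1 + \<epsilon>) * c"
      using K(2) by linarith
    then show ?thesis
      using Alv_inv_norm_nonneg[OF \<open>w \<noteq> 0\<close> bij_w] by simp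
  qed
  moreover have "c * norm y \<le> ((1 + \<epsilon>) * c * Alv_inv_norm A lam w) * norm (Alv A lam u y)"
    if "y \<in> Tsp u" for y
  proof -
    have "c * norm y \<le> (1 + 2 * m * s) * Alv_inv_norm A lam w * norm (Alv A lam u y)"
      using Alv_upper_bound_perturbed[OF fA u w eig bij_u bij_w _ that] K(3)
      by (auto simp: m_def c_def s_def)
    also have "\<dots> \<le> (1 + \<epsilon>) * c * Alv_inv_norm A lam w * norm (Alv A lam u y)"
      using K(2) Alv_inv_norm_nonneg[OF \<open>w \<noteq> 0\<close> bij_w] by (intro mult_right_mono) auto
    finally show ?thesis .
  qed
  ultimately have "m \<le> (1 + \<epsilon>) * c * Alv_inv_norm A lam w / c"
    unfolding m_def by (rule Alv_inv_norm_le_of_lower_bound[OF bij_u K(3)])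
  then show "m \<le> (1 + \<epsilon>) * Alv_inv_norm A lam w"
    using K(3) by simp
qed

lemma mu_eq_of_Pperp_eq_0:
  assumes "norm u = 1" "w \<noteq> 0" "Pperp u w = 0"
  shows "mu A lam w = mu A lam u"
proof -
  have "w = cinner w u *s u"
    using Pperp_unit[OF assms(1), of w] assms(3) by simp
  moreover have "cinner w u \<noteq> 0"
    using calculation assms(2) by auto
  ultimately show ?thesis
    using mu_smult_vector by metis
qed

lemma ereal_div_one_pm_bounds:
  fixes x :: ereal and \<epsilon> :: real
  assumes "0 \<le> x" "0 \<le> \<epsilon>" "\<epsilon> < 1"
  shows "x / ereal (1 + \<epsilon>) \<le> x \<and> x \<le> x / ereal (1 - \<epsilon>)"
proof (cases x)
  case (real r)
  then have "r * \<epsilon> \<ge> 0"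
    using assms by simp
  then show ?thesis
    using real assms by (simp add: divide_le_eq le_divide_eq algebra_simps)
qed (use assms in simp_all)

lemma mu_perturbation_unit:
  assumes fA: "frob_norm A = 1" and u: "norm u = 1" and w: "norm w = 1"
    and eig: "A *v u = lam *s u"
    and h: "ereal (36/10) * mu A lam u * ereal (arccos (cmod (cinner u w))) \<le> ereal \<epsilon>"
    and "\<epsilon> < 1"
  shows "mu A lam u / ereal (1 + \<epsilon>) \<le> mu A lam w \<and> mu A lam w \<le> mu A lam u / ereal (1 - \<epsilon>)"
proof -
  let ?\<theta> = "arccos (cmod (cinner u w))"
  have "u \<noteq> 0" "w \<noteq> 0"
    using u w by auto
  have "0 \<le> ereal (36/10) * mu A lam u * ereal ?\<theta>"
    using mu_nonneg[OF \<open>u \<noteq> 0\<close>] arccos_cinner_nonneg[OF u w] by simp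
  then have "0 \<le> ereal \<epsilon>"
    using h by (rule order_trans)
  then have "0 \<le> \<epsilon>"
    by simp
  show ?thesis
  proof (cases "Pperp u w = 0")
    case True
    then show ?thesis
      using mu_eq_of_Pperp_eq_0[OF u \<open>w \<noteq> 0\<close>] ereal_div_one_pm_bounds mu_nonneg[OF \<open>u \<noteq> 0\<close>]
        \<open>0 \<le> \<epsilon>\<close> \<open>\<epsilon> < 1\<close> by simp
  next
    case False
    then have "0 < ?\<theta>"
      using sin_arccos_cinner[OF u w] arccos_cinner_nonneg[OF u w]
      by (metis less_eq_real_def norm_eq_zero sin_zero)
    then have bij_u: "bij_betw (Alv A lam u) (Tsp u) (Tsp u)"
      using h by (cases "bij_betw (Alv A lam u) (Tsp u) (Tsp u)") (simp_all add: mu_def)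
    then have "36/10 * Alv_inv_norm A lam u * ?\<theta> \<le> \<epsilon>"
      using h by (simp add: mu_eq_Alv_inv_norm fA)
    note bounds = Alv_inv_norm_perturbation[OF fA u w eig bij_u False this \<open>\<epsilon> < 1\<close>]
    then show ?thesis
      using \<open>0 \<le> \<epsilon>\<close> \<open>\<epsilon> < 1\<close> bij_u
      by (simp add: mu_eq_Alv_inv_norm fA divide_le_eq mult.commute)
  qed
qed

lemma sgn_vec_eq_smult: "sgn (v::complex^'n) = complex_of_real (inverse (norm v)) *s v"
  unfolding vec_eq_iff sgn_div_norm vector_scaleR_component vector_smult_component
  by (simp add: scaleR_conv_of_real)

lemma dP_eq_arccos_sgn: "dP v v' = arccos (cmod (cinner (sgn v) (sgn v')))"
  by (simp add: dP_def sgn_vec_eq_smult cinner_scale_left cinner_scale_right norm_mult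
      norm_inverse divide_inverse mult_ac)

theorem lemma4p4:
  fixes A :: "complex^'n^'n" and lam :: complex and v v' :: "complex^'n" and \<epsilon> :: real
  assumes "frob_norm A = 1"
    and "v \<noteq> 0" and "v' \<noteq> 0"
    and "A *v v = lam *s v"
    and "ereal (36/10) * mu A lam v * ereal (dP v v') \<le> ereal \<epsilon>"
    and "\<epsilon> < 1"
  shows "mu A lam v / ereal (1 + \<epsilon>) \<le> mu A lam v'
    \<and> mu A lam v' \<le> mu A lam v / ereal (1 - \<epsilon>)"
proof -
  have mu_sgn: "mu A lam (sgn x) = mu A lam x" if "x \<noteq> 0" for x :: "complex^'n"
    using that by (simp add: sgn_vec_eq_smult mu_smult_vector)
  have "A *v sgn v = lam *s sgn v"
    using assms(4)
    by (simp add: sgn_vec_eq_smult vector_scalar_commute vector_smult_assoc mult.commute)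
  from mu_perturbation_unit[OF assms(1) _ _ this, of "sgn v'" \<epsilon>]
  show ?thesis
    using assms(2,3,5,6) by (simp add: norm_sgn mu_sgn dP_eq_arccos_sgn)
qed

end
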